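(* The following identities hold: \begin{align*} \sum_{k=0}^\infty\frac{(22k^2+17k-2)\binom{4k}k}{(k+1)16^k}&=17, \\\sum_{k=0}^\infty\frac{(11k^2+8k+1)\binom{4k}k}{(3k+1)(3k+2)16^k}&=1, \\\sum_{k=0}^\infty\frac{(22k^2-18k+3)\binom{4k}k}{(2k-1)(4k-1)(4k-3)16^k}&=-\frac13. \end{align*} *)

theory Defs
  imports Complex_Main
begin

end

theory Submission
  imports Defs
begin

(*
  Let R_r(k) = r/(4k+r) C(4k+r,k), the coefficients of B(x)^r where B = 1 + x B^4, and
  s_r = sum_k R_r(k)/16^k. Coefficientwise B^(r+1) - B^r = x B^(r+4), so s_(r+1) - s_r = s_(r+4)/16
  for r >= 1 and s_1 = 1 + s_4/16. Hence v_r = s_(r+3) + 2 s_(r+2) + 4 s_(r+1) - 8 s_r doubles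
  at every step, whereas s_r = O((3/2)^r); so v_1 = 0, which means 4 s_1 + 2 s_2 + s_3 = 8.

  With t_k = C(4k,k)/16^k, each summand of the theorem equals
  G(k) t_k - G(k+1) t_(k+1) + c (4 R_1(k) + 2 R_2(k) + R_3(k))/16^k,
  a rational identity in k once divided by t_k, for (G(k), c) = (27 + 54k, -5/4), (3, -1/4) and
  (the summand's own rational factor, 1/12). Telescoping gives the sums G(0) + 8c.
*)

lemma eq_0_if_mult_pow_le:
  fixes c K a b :: real
  assumes "0 \<le> b" "b < a" "\<And>n. \<bar>c\<bar> * a^n \<le> K * b^n"
  shows "c = 0"
proof -
  have "\<bar>c\<bar> \<le> K * (b / a)^n" for n
    using assms(3)[of n] assms(1,2) by (simp add: power_divide field_simps)
  moreover have "(\<lambda>n. K * (b / a)^n) \<longlonglongrightarrow> 0"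
    using assms(1,2) by (intro tendsto_mult_right_zero LIMSEQ_power_zero) simp
  ultimately have "\<bar>c\<bar> \<le> 0"
    by (intro LIMSEQ_le_const) auto
  then show ?thesis
    by simp
qed

lemma telescope_add_sums:
  fixes g w :: "nat \<Rightarrow> real"
  assumes "g \<longlonglongrightarrow> 0" "w sums W"
  shows "(\<lambda>k. g k - g (Suc k) + c * w k) sums (g 0 + c * W)"
  using sums_add[OF telescope_sums'[OF assms(1)] sums_mult[OF assms(2)]] by simp

lemma binomial_le_three_halves_pow: "real (n choose k) \<le> (3/2)^n * 2^k"
proof (cases "k \<le> n")
  case True
  have "real (n choose k) * (1/2)^k \<le> (\<Sum>j\<le>n. real (n choose j) * (1/2)^j)"
    using True by (intro member_le_sum) auto
  also have "\<dots> = (1/2 + 1)^n"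
    using binomial_ring[of "1/2::real" 1 n] by simp
  finally show ?thesis by (simp add: field_simps)
qed (simp add: binomial_eq_0)

text \<open>The Raney number \<open>r/(4k+r) * C(4k+r, k)\<close>, the \<open>k\<close>-th coefficient of \<open>B(x)^r\<close> where
  \<open>B = 1 + x B^4\<close>. For \<open>r = 0\<close> it is \<open>0\<close> even at \<open>k = 0\<close>, which is why the initial
  terms appear in \<open>raney_sum_Suc_diff\<close>.\<close>

definition raney :: "nat \<Rightarrow> nat \<Rightarrow> real" where
  "raney r k = real r * fact (4*k + r - 1) / (fact k * fact (3*k + r))"

lemma raney_nonneg: "0 \<le> raney r k"
  by (simp add: raney_def)

lemma raney_le_binomial: "raney r k \<le> real ((4*k + r) choose k)"
proof (cases "r = 0")
  case False
  have "real r * fact (4*k + r - 1) \<le> (fact (4*k + r) :: real)"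
    using False fact_reduce[of "4*k+r", where 'a=real] by (simp add: mult_right_mono)
  moreover have "real ((4*k + r) choose k) = fact (4*k + r) / (fact k * fact (3*k + r))"
    by (simp add: binomial_fact)
  ultimately show ?thesis
    unfolding raney_def by (simp add: divide_right_mono)
qed (simp add: raney_def)

lemma raney_zero_right: "r \<ge> 1 \<Longrightarrow> raney r 0 = 1"
  using fact_reduce[of r] by (simp add: raney_def)

lemma raney_zero_left: "raney 0 k = 0"
  by (simp add: raney_def)

lemma raney_Suc_diff: "raney (Suc r) (Suc m) - raney r (Suc m) = raney (r + 4) m"
proof -
  define N where "N = 4*m + r + 3"
  define D where "D = 3*m + r + 3"
  define A where "A = fact N / (fact (Suc m) * fact (Suc D) :: real)"
  have idx: "4 * Suc m + Suc r - 1 = Suc N" "4 * Suc m + r - 1 = N" "4 * m + (r + 4) - 1 = N"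
    "3 * Suc m + Suc r = Suc D" "3 * Suc m + r = D" "3 * m + (r + 4) = Suc D"
    by (simp_all add: N_def D_def)
  have "raney (Suc r) (Suc m) = A * (Suc r * Suc N)"
       "raney r (Suc m) = A * (r * Suc D)"
       "raney (r + 4) m = A * ((r + 4) * Suc m)"
    unfolding raney_def idx A_def fact_Suc[of m] fact_Suc[of D] fact_Suc[of N]
    by (simp_all add: field_simps del: of_nat_Suc) (simp_all add: algebra_simps)
  moreover have "Suc r * Suc N = r * Suc D + (r + 4) * Suc m"
    by (simp add: N_def D_def algebra_simps)
  ultimately show ?thesis
    by (metis add_diff_cancel_left' distrib_left of_nat_add of_nat_mult)
qed

lemma binomial_term_le: "real ((4*k + r) choose k) / 16^k \<le> (3/2)^r * (81/128)^k"
proof -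
  have "real ((4*k + r) choose k) \<le> (3/2)^(4*k + r) * 2^k"
    by (rule binomial_le_three_halves_pow)
  also have "\<dots> = (3/2)^r * ((81/16)^k * 2^k)"
    using power_mult[of "3/2::real" 4 k] by (simp add: power_add power_divide mult_ac)
  also have "(81/16::real)^k * 2^k = (81/128)^k * 16^k"
    by (simp only: power_mult_distrib[symmetric]) simp
  finally show ?thesis
    by (simp add: divide_le_eq mult.assoc)
qed

lemma raney_term_le: "raney r k / 16^k \<le> (3/2)^r * (81/128)^k"
  using divide_right_mono[OF raney_le_binomial, of "16^k"] binomial_term_le by (rule order_trans) simp

lemma summable_raney: "summable (\<lambda>k. raney r k / 16^k)"
  by (rule summable_comparison_test'[of "\<lambda>k. (3/2)^r * (81/128)^k" 0])
     (use raney_term_le raney_nonneg in auto)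

definition raney_sum :: "nat \<Rightarrow> real" where
  "raney_sum r = (\<Sum>k. raney r k / 16^k)"

lemma raney_sums: "(\<lambda>k. raney r k / 16^k) sums raney_sum r"
  unfolding raney_sum_def by (rule summable_sums[OF summable_raney])

lemma raney_sum_nonneg: "0 \<le> raney_sum r"
  unfolding raney_sum_def by (intro suminf_nonneg summable_raney) (simp add: raney_nonneg)

lemma raney_sum_le: "raney_sum r \<le> 128/47 * (3/2)^r"
proof -
  have "(\<lambda>k. (3/2)^r * (81/128::real)^k) sums ((3/2)^r * (1 / (1 - 81/128)))"
    by (intro sums_mult geometric_sums) simp
  then have "raney_sum r \<le> (3/2)^r * (1 / (1 - 81/128))"
    by (rule sums_le[OF raney_term_le raney_sums])
  then show ?thesis
    by simp
qed

lemma raney_sum_Suc_diff: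
  "raney_sum (Suc r) - raney_sum r = raney (Suc r) 0 - raney r 0 + raney_sum (r + 4) / 16"
proof -
  let ?d = "\<lambda>k. raney (Suc r) k / 16^k - raney r k / 16^k"
  have "(\<lambda>k. ?d (Suc k)) = (\<lambda>k. raney (r + 4) k / 16^k / 16)"
    using raney_Suc_diff by (simp add: diff_divide_distrib[symmetric] mult.commute)
  then have "(\<lambda>k. ?d (Suc k)) sums (raney_sum (r + 4) / 16)"
    using raney_sums sums_divide by metis
  then have "?d sums (raney_sum (r + 4) / 16 + ?d 0)"
    by (rule sums_Suc_iff[THEN iffD1])
  moreover have "?d sums (raney_sum (Suc r) - raney_sum r)"
    by (intro sums_diff raney_sums)
  ultimately show ?thesis
    using sums_unique2 by fastforce
qed

lemma raney_sum_zero: "raney_sum 0 = 0"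
  by (simp add: raney_sum_def raney_zero_left)

lemma raney_sum_relation: "4 * raney_sum 1 + 2 * raney_sum 2 + raney_sum 3 = 8"
proof -
  let ?s = raney_sum
  define v where "v r = ?s (r + 3) + 2 * ?s (r + 2) + 4 * ?s (r + 1) - 8 * ?s r" for r
  have s_rec: "?s (r + 4) = 16 * (?s (Suc r) - ?s r)" if "r \<ge> 1" for r
    using raney_sum_Suc_diff[of r] that by (simp add: raney_zero_right)
  have "v (Suc r) = 2 * v r" if "r \<ge> 1" for r
    using s_rec[OF that] by (simp add: v_def algebra_simps numeral_eq_Suc)
  then have v_pow: "v (Suc n) = 2^n * v 1" for n
    by (induction n) simp_all
  have s_le: "?s (n + j) \<le> 128/47 * (3/2)^(n + 4)" if "j \<le> 4" for n j
  proof -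
    have "(3/2::real)^(n + j) \<le> (3/2)^(n + 4)"
      using that by (intro power_increasing) simp_all
    then show ?thesis
      using raney_sum_le[of "n + j"] by linarith
  qed
  have "\<bar>v 1\<bar> * 2^n \<le> (15 * 128/47 * (3/2)^4) * (3/2)^n" for n
  proof -
    have "v (Suc n) = ?s (n + 4) + 2 * ?s (n + 3) + 4 * ?s (n + 2) - 8 * ?s (n + 1)"
      by (simp add: v_def numeral_eq_Suc)
    then have "\<bar>v (Suc n)\<bar> \<le> 15 * (128/47 * (3/2)^(n + 4))"
      using s_le[of 1 n] s_le[of 2 n] s_le[of 3 n] s_le[of 4 n] raney_sum_nonneg[of "n + 1"]
        raney_sum_nonneg[of "n + 2"] raney_sum_nonneg[of "n + 3"] raney_sum_nonneg[of "n + 4"]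
      unfolding abs_le_iff by linarith
    moreover have "\<bar>v (Suc n)\<bar> = \<bar>v 1\<bar> * 2^n"
      using v_pow[of n] by (simp add: abs_mult)
    ultimately show ?thesis
      by (simp add: power_add mult.commute mult.left_commute)
  qed
  then have "v 1 = 0"
    by (rule eq_0_if_mult_pow_le[rotated 2]) simp_all
  moreover have "?s 4 = 16 * (?s 1 - 1)"
    using raney_sum_Suc_diff[of 0] by (simp add: raney_zero_left raney_zero_right raney_sum_zero)
  ultimately show ?thesis
    by (simp add: v_def numeral_eq_Suc)
qed

definition binom4_term :: "nat \<Rightarrow> real" where
  "binom4_term k = real ((4*k) choose k) / 16^k"

definition binom4_ratio :: "real \<Rightarrow> real" where
  "binom4_ratio x = (4*x+1) * (4*x+2) * (4*x+3) * (4*x+4) / (16 * (x+1) * (3*x+1) * (3*x+2) * (3*x+3))"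

definition raney_weight :: "real \<Rightarrow> real" where
  "raney_weight x = 4 / (3*x+1) + 4 * (4*x+1) / ((3*x+1) * (3*x+2))
                    + 3 * (4*x+1) * (4*x+2) / ((3*x+1) * (3*x+2) * (3*x+3))"

lemma binom4_term_fact: "binom4_term k = fact (4*k) / (fact k * fact (3*k) * 16^k)"
  by (simp add: binom4_term_def binomial_fact)

lemma binom4_term_Suc: "binom4_term (Suc k) = binom4_term k * binom4_ratio (real k)"
proof -
  define x where "x = real k"
  have fact_Suc_eqs: "fact (4 * Suc k) = (4*x+4) * (4*x+3) * (4*x+2) * (4*x+1) * fact (4*k)"
    "fact (3 * Suc k) = (3*x+3) * (3*x+2) * (3*x+1) * fact (3*k)"
    "fact (Suc k) = (x+1) * fact k"
    unfolding x_def by (simp_all add: fact_Suc numeral_eq_Suc add_Suc_right algebra_simps)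
  have "x+1 \<noteq> 0" "3*x+1 \<noteq> 0" "3*x+2 \<noteq> 0" "3*x+3 \<noteq> 0"
    by (simp_all add: x_def add_nonneg_eq_0_iff)
  then show ?thesis
    unfolding binom4_term_fact fact_Suc_eqs binom4_ratio_def x_def[symmetric]
    by (simp add: divide_simps) (simp add: algebra_simps)
qed

lemma raney_weight_eq:
  "(4 * raney 1 k + 2 * raney 2 k + raney 3 k) / 16^k = binom4_term k * raney_weight (real k)"
proof -
  define x where "x = real k"
  have raney_123: "raney 1 k = fact (4*k) / (fact k * ((3*x+1) * fact (3*k)))"
       "raney 2 k = 2 * ((4*x+1) * fact (4*k)) / (fact k * ((3*x+2) * (3*x+1) * fact (3*k)))"
       "raney 3 k = 3 * ((4*x+2) * (4*x+1) * fact (4*k))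
                    / (fact k * ((3*x+3) * (3*x+2) * (3*x+1) * fact (3*k)))"
    unfolding raney_def x_def by (simp_all add: fact_Suc numeral_eq_Suc add_Suc_right algebra_simps)
  have "3*x+1 \<noteq> 0" "3*x+2 \<noteq> 0" "3*x+3 \<noteq> 0"
    by (simp_all add: x_def add_nonneg_eq_0_iff)
  then show ?thesis
    unfolding binom4_term_fact raney_123 raney_weight_def x_def[symmetric]
    by (simp add: divide_simps) (simp add: algebra_simps)
qed

lemma raney_weight_sums: "(\<lambda>k. (4 * raney 1 k + 2 * raney 2 k + raney 3 k) / 16^k) sums 8"
proof -
  have "(\<lambda>k. 4 * (raney 1 k / 16^k) + 2 * (raney 2 k / 16^k) + raney 3 k / 16^k)
          sums (4 * raney_sum 1 + 2 * raney_sum 2 + raney_sum 3)"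
    by (intro sums_add sums_mult raney_sums)
  then show ?thesis
    using raney_sum_relation by (simp add: add_divide_distrib)
qed

lemma abs_binom4_term_le: "\<bar>binom4_term k\<bar> \<le> (81/128)^k"
  using binomial_term_le[of k 0] by (simp add: binom4_term_def)

lemma binom4_term_tendsto: "(\<lambda>k. (a + b * real k) * binom4_term k) \<longlonglongrightarrow> 0"
proof (rule tendsto_0_le[where K = 1])
  show "(\<lambda>k. \<bar>a\<bar> * (81/128::real)^k + \<bar>b\<bar> * (real k * (81/128)^k)) \<longlonglongrightarrow> 0"
    using LIMSEQ_power_zero[of "81/128::real"] powser_times_n_limit_0[of "81/128::real"]
    by (intro tendsto_add_zero tendsto_mult_right_zero) simp_all
  have "\<bar>(a + b * real k) * binom4_term k\<bar> \<le> (\<bar>a\<bar> + \<bar>b\<bar> * real k) * (81/128)^k" for k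
    unfolding abs_mult
    by (intro mult_mono abs_triangle_ineq[THEN order_trans]) (auto simp: abs_binom4_term_le abs_mult)
  then show "\<forall>\<^sub>F k in sequentially. norm ((a + b * real k) * binom4_term k)
      \<le> norm (\<bar>a\<bar> * (81/128::real)^k + \<bar>b\<bar> * (real k * (81/128)^k)) * 1"
    by (simp add: algebra_simps)
qed

lemma binom4_telescoping_sums:
  assumes lim: "(\<lambda>k. G (real k) * binom4_term k) \<longlonglongrightarrow> 0"
    and eq: "\<And>x. 0 \<le> x \<Longrightarrow> R x = G x - G (x + 1) * binom4_ratio x + c * raney_weight x"
  shows "(\<lambda>k. R (real k) * binom4_term k) sums (G 0 + 8 * c)"
proof -
  let ?g = "\<lambda>k. G (real k) * binom4_term k"
  let ?w = "\<lambda>k. (4 * raney 1 k + 2 * raney 2 k + raney 3 k) / 16^k"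
  have "R (real k) * binom4_term k = ?g k - ?g (Suc k) + c * (binom4_term k * raney_weight (real k))" for k
    by (simp add: eq binom4_term_Suc algebra_simps)
  then have "R (real k) * binom4_term k = ?g k - ?g (Suc k) + c * ?w k" for k
    by (simp only: raney_weight_eq)
  then show ?thesis
    using telescope_add_sums[OF lim raney_weight_sums, of c] by (simp add: binom4_term_def mult.commute)
qed

lemma binom4_term_divide: "a * real ((4*k) choose k) / (b * 16^k) = a / b * binom4_term k"
  by (simp add: binom4_term_def)

lemma binom4_series_17:
  "(\<lambda>k. (22 * real k ^ 2 + 17 * real k - 2) * real ((4 * k) choose k)
     / ((real k + 1) * 16 ^ k)) sums 17"
proof -
  have "(\<lambda>k. (22 * real k ^ 2 + 17 * real k - 2) / (real k + 1) * binom4_term k)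
          sums (27 + 54 * 0 + 8 * (-5/4))"
  proof (rule binom4_telescoping_sums[where G = "\<lambda>x. 27 + 54 * x"])
    show "(\<lambda>k. (27 + 54 * real k) * binom4_term k) \<longlonglongrightarrow> 0"
      by (rule binom4_term_tendsto)
    fix x :: real
    assume "0 \<le> x"
    then have "x + 1 \<noteq> 0" "3*x + 1 \<noteq> 0" "3*x + 2 \<noteq> 0" "3*x + 3 \<noteq> 0"
      by linarith+
    then show "(22 * x^2 + 17 * x - 2) / (x + 1)
        = 27 + 54 * x - (27 + 54 * (x + 1)) * binom4_ratio x + (-5/4) * raney_weight x"
      unfolding binom4_ratio_def raney_weight_def
      by (simp add: divide_simps) (simp add: algebra_simps power2_eq_square)
  qed
  then show ?thesis
    unfolding binom4_term_divide by simp
qed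

lemma binom4_series_1:
  "(\<lambda>k. (11 * real k ^ 2 + 8 * real k + 1) * real ((4 * k) choose k)
     / ((3 * real k + 1) * (3 * real k + 2) * 16 ^ k)) sums 1"
proof -
  have "(\<lambda>k. (11 * real k ^ 2 + 8 * real k + 1) / ((3 * real k + 1) * (3 * real k + 2)) * binom4_term k)
          sums (3 + 8 * (-1/4))"
  proof (rule binom4_telescoping_sums[where G = "\<lambda>x. 3"])
    show "(\<lambda>k. 3 * binom4_term k) \<longlonglongrightarrow> 0"
      using binom4_term_tendsto[of 3 0] by simp
    fix x :: real
    assume "0 \<le> x"
    then have "x + 1 \<noteq> 0" "3*x + 1 \<noteq> 0" "3*x + 2 \<noteq> 0" "3*x + 3 \<noteq> 0"
      by linarith+
    then show "(11 * x^2 + 8 * x + 1) / ((3 * x + 1) * (3 * x + 2))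
        = 3 - 3 * binom4_ratio x + (-1/4) * raney_weight x"
      unfolding binom4_ratio_def raney_weight_def
      by (simp add: divide_simps) (simp add: algebra_simps power2_eq_square)
  qed
  then show ?thesis
    unfolding binom4_term_divide by simp
qed

lemma binom4_series_minus_third:
  "(\<lambda>k. (22 * real k ^ 2 - 18 * real k + 3) * real ((4 * k) choose k)
     / ((2 * real k - 1) * (4 * real k - 1) * (4 * real k - 3) * 16 ^ k)) sums (- 1 / 3)"
proof -
  \<comment> \<open>Here the telescoping function is the summand itself: \<open>R(k+1) t(k+1)\<close> is a twelfth of the
    weight term, which also gives its decay.\<close>
  define R where "R x = (22 * x^2 - 18 * x + 3) / ((2 * x - 1) * (4 * x - 1) * (4 * x - 3))" for x :: real
  have shift: "R (x + 1) * binom4_ratio x = raney_weight x / 12" if "0 \<le> x" for x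
  proof -
    have "x + 1 \<noteq> 0" "3*x + 1 \<noteq> 0" "3*x + 2 \<noteq> 0" "3*x + 3 \<noteq> 0"
      "2*x + 1 \<noteq> 0" "4*x + 1 \<noteq> 0" "4*x + 3 \<noteq> 0"
      using that by linarith+
    then show ?thesis
      unfolding R_def binom4_ratio_def raney_weight_def
      by (simp add: divide_simps) (simp add: algebra_simps power2_eq_square)
  qed
  have "R (real (Suc k)) * binom4_term (Suc k)
      = (4 * raney 1 k + 2 * raney 2 k + raney 3 k) / 16^k / 12" for k
  proof -
    have "R (real (Suc k)) * binom4_term (Suc k) = binom4_term k * (R (real k + 1) * binom4_ratio (real k))"
      by (simp add: binom4_term_Suc mult_ac add.commute)
    then show ?thesis
      by (simp only: shift of_nat_0_le_iff raney_weight_eq times_divide_eq_right)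
  qed
  then have "(\<lambda>k. R (real (Suc k)) * binom4_term (Suc k))
      = (\<lambda>k. (4 * raney 1 k + 2 * raney 2 k + raney 3 k) / 16^k / 12)"
    by (rule ext)
  moreover have "\<dots> \<longlonglongrightarrow> 0"
    using raney_weight_sums by (intro tendsto_divide_zero summable_LIMSEQ_zero sums_summable)
  ultimately have "(\<lambda>k. R (real (Suc k)) * binom4_term (Suc k)) \<longlonglongrightarrow> 0"
    by simp
  then have "(\<lambda>k. R (real k) * binom4_term k) \<longlonglongrightarrow> 0"
    by (rule LIMSEQ_imp_Suc)
  then have "(\<lambda>k. R (real k) * binom4_term k) sums (R 0 + 8 * (1/12))"
    by (rule binom4_telescoping_sums) (simp add: shift)
  then show ?thesis
    unfolding binom4_term_divide by (simp add: R_def)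
qed

theorem theorem1p3:
  shows "(\<lambda>k::nat. (22 * real k ^ 2 + 17 * real k - 2) * real ((4 * k) choose k)
            / ((real k + 1) * 16 ^ k)) sums 17 \<and>
         (\<lambda>k::nat. (11 * real k ^ 2 + 8 * real k + 1) * real ((4 * k) choose k)
            / ((3 * real k + 1) * (3 * real k + 2) * 16 ^ k)) sums 1 \<and>
         (\<lambda>k::nat. (22 * real k ^ 2 - 18 * real k + 3) * real ((4 * k) choose k)
            / ((2 * real k - 1) * (4 * real k - 1) * (4 * real k - 3) * 16 ^ k)) sums (- 1 / 3)"
  using binom4_series_17 binom4_series_1 binom4_series_minus_third by blast

end
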